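(* For every partition $\lambda$, $\tau_{p_\lambda}(x)=x^{\ell(\lambda)}(x-1)^{|\lambda|-\ell(\lambda)}$.
   Context: $p_\lambda=p_{\lambda_1}\cdots p_{\lambda_{\ell(\lambda)}}$ with $p_n=\sum_i x_i^n$ (power-sum symmetric functions); $|\lambda|$ is the size and $\ell(\lambda)$ the number of parts of $\lambda$. $P_\lambda$ is the disjoint union of paths with $\lambda_1,\dots,\lambda_{\ell(\lambda)}$ vertices, $X_G$ the chromatic symmetric function, and $\{X_{P_\lambda}\}$ is a basis of the symmetric functions over $\mathbb{Q}$. For $f=\sum_\lambda a_\lambda X_{P_\lambda}$, $\tau_f(x)=\sum_\lambda a_\lambda x^{\ell(\lambda)}$. *)

theory Defs
  imports "HOL-Library.Poly_Mapping" "HOL-Library.FuncSet"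
          "HOL-Computational_Algebra.Polynomial"
begin

text \<open>Monomials in the countably many variables x_0, x_1, ... are exponent vectors
  (finitely supported maps nat to nat).  A (formal) symmetric function over Q is
  represented by its coefficient function on monomials.\<close>

type_synonym monomial = "nat \<Rightarrow>\<^sub>0 nat"
type_synonym series = "monomial \<Rightarrow> rat"

definition series_one :: series where
  "series_one \<alpha> = (if \<alpha> = 0 then 1 else 0)"

definition series_mult :: "series \<Rightarrow> series \<Rightarrow> series" where
  "series_mult f g \<alpha> = (\<Sum>(\<beta>, \<gamma>) \<in> {(\<beta>, \<gamma>). \<beta> + \<gamma> = \<alpha>}. f \<beta> * g \<gamma>)"

text \<open>Power sum p_n = sum_i x_i^n  (n \<ge> 1).\<close>
definition power_sum :: "nat \<Rightarrow> series" where
  "power_sum n \<alpha> = (if \<exists>i. \<alpha> = Poly_Mapping.single i n then 1 else 0)"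

definition is_partition :: "nat list \<Rightarrow> bool" where
  "is_partition lam \<longleftrightarrow> sorted_wrt (\<ge>) lam \<and> (\<forall>k \<in> set lam. 0 < k)"

definition power_sum_part :: "nat list \<Rightarrow> series" where
  "power_sum_part lam = foldr (\<lambda>n acc. series_mult (power_sum n) acc) lam series_one"

text \<open>Chromatic symmetric function of a finite simple graph (V, E):
  X_G = sum over proper colourings kappa : V \<rightarrow> colours of prod_v x_{kappa v}.\<close>
definition chromatic :: "'v set \<Rightarrow> ('v \<Rightarrow> 'v \<Rightarrow> bool) \<Rightarrow> series" where
  "chromatic V E \<alpha> = of_nat (card {\<kappa> \<in> V \<rightarrow>\<^sub>E (UNIV :: nat set).
       (\<forall>u\<in>V. \<forall>v\<in>V. E u v \<longrightarrow> \<kappa> u \<noteq> \<kappa> v) \<and>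
       (\<forall>i. card {v \<in> V. \<kappa> v = i} = Poly_Mapping.lookup \<alpha> i)})"

text \<open>The path forest P_lambda: component j is a path on lambda_j vertices
  (j, 0) - (j, 1) - ... - (j, lambda_j - 1).\<close>
definition path_forest_V :: "nat list \<Rightarrow> (nat \<times> nat) set" where
  "path_forest_V lam = {(j, k). j < length lam \<and> k < lam ! j}"

definition path_forest_E :: "nat list \<Rightarrow> nat \<times> nat \<Rightarrow> nat \<times> nat \<Rightarrow> bool" where
  "path_forest_E lam u v \<longleftrightarrow> fst u = fst v \<and> (snd v = snd u + 1 \<or> snd u = snd v + 1)"

definition X_path :: "nat list \<Rightarrow> series" where
  "X_path lam = chromatic (path_forest_V lam) (path_forest_E lam)"

definition is_path_expansion :: "(nat list \<Rightarrow> rat) \<Rightarrow> series \<Rightarrow> bool" where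
  "is_path_expansion a f \<longleftrightarrow>
     finite {\<mu>. a \<mu> \<noteq> 0} \<and> (\<forall>\<mu>. a \<mu> \<noteq> 0 \<longrightarrow> is_partition \<mu>) \<and>
     (\<forall>\<alpha>. f \<alpha> = (\<Sum>\<mu> \<in> {\<mu>. a \<mu> \<noteq> 0}. a \<mu> * X_path \<mu> \<alpha>))"

definition tau :: "(nat list \<Rightarrow> rat) \<Rightarrow> rat poly" where
  "tau a = (\<Sum>\<mu> \<in> {\<mu>. a \<mu> \<noteq> 0}. monom (a \<mu>) (length \<mu>))"

end

theory Submission
  imports Defs "HOL-Combinatorics.Permutations"
begin

text \<open>Count colourings of path forests whose edges are labelled: an edge labelled \<open>True\<close>
  forces equal colours at its ends, one labelled \<open>False\<close> distinct colours.  All labels \<open>False\<close>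
  gives \<open>X_(P_mu)\<close>, all labels \<open>True\<close> gives \<open>p_mu\<close> (colour each path constantly).  Cutting a
  labelled edge splits its path in two and relaxes the constraint, so
  count(cut) = count(True) + count(False).  Induction on the number of \<open>True\<close> edges then writes
  every count, in particular \<open>p_lam\<close>, as an integer combination of the \<open>X_(P_mu)\<close>.

  For \<open>tau\<close>, set \<open>x_0 = \<dots> = x_(k-1) = 1\<close> and all other variables to 0, degree by degree.
  Induction on the number of \<open>False\<close> edges gives \<open>k^(l(mu)) (k-1)^(|mu| - l(mu))\<close> for \<open>X_(P_mu)\<close>
  and \<open>k^(l(lam))\<close> for \<open>p_lam\<close>.  With \<open>x = k/(k-1)\<close> this says that the degree-\<open>n\<close> part of \<open>tau\<close>
  and \<open>[n = |lam|] x^(l(lam)) (x-1)^(|lam| - l(lam))\<close> agree at infinitely many points.\<close>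

section \<open>Colourings with equality and inequality constraints\<close>

definition has_colour_counts :: "'v set \<Rightarrow> ('v \<Rightarrow> nat) \<Rightarrow> monomial \<Rightarrow> bool" where
  "has_colour_counts V \<kappa> \<alpha> \<longleftrightarrow> (\<forall>i. card {v\<in>V. \<kappa> v = i} = Poly_Mapping.lookup \<alpha> i)"

definition constrained_colourings ::
    "'v set \<Rightarrow> ('v \<times> 'v) set \<Rightarrow> ('v \<times> 'v) set \<Rightarrow> monomial \<Rightarrow> ('v \<Rightarrow> nat) set" where
  "constrained_colourings V D S \<alpha> = {\<kappa> \<in> V \<rightarrow>\<^sub>E UNIV.
     (\<forall>(u, w)\<in>D. \<kappa> u \<noteq> \<kappa> w) \<and> (\<forall>(u, w)\<in>S. \<kappa> u = \<kappa> w) \<and> has_colour_counts V \<kappa> \<alpha>}"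

lemma has_colour_counts_unique:
  "has_colour_counts V \<kappa> \<alpha> \<Longrightarrow> has_colour_counts V \<kappa> \<beta> \<Longrightarrow> \<alpha> = \<beta>"
  by (rule poly_mapping_eqI) (simp add: has_colour_counts_def)

lemma keys_colour_counts:
  assumes "finite V" "has_colour_counts V \<kappa> \<alpha>"
  shows "Poly_Mapping.keys \<alpha> = \<kappa> ` V"
proof -
  have "i \<in> Poly_Mapping.keys \<alpha> \<longleftrightarrow> {v\<in>V. \<kappa> v = i} \<noteq> {}" for i
    using assms card_0_eq[of "{v\<in>V. \<kappa> v = i}"] by (simp add: has_colour_counts_def in_keys_iff)
  then show ?thesis
    by auto
qed

lemma finite_colourings_with_counts:
  assumes "finite V"
  shows "finite {\<kappa> \<in> V \<rightarrow>\<^sub>E UNIV. has_colour_counts V \<kappa> \<alpha>}"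
proof (rule finite_subset)
  show "{\<kappa> \<in> V \<rightarrow>\<^sub>E UNIV. has_colour_counts V \<kappa> \<alpha>} \<subseteq> V \<rightarrow>\<^sub>E Poly_Mapping.keys \<alpha>"
    using keys_colour_counts[OF assms] by (auto simp: PiE_def Pi_def)
qed (use assms in \<open>simp add: finite_PiE\<close>)

lemma finite_constrained_colourings: "finite V \<Longrightarrow> finite (constrained_colourings V D S \<alpha>)"
  by (rule finite_subset[OF _ finite_colourings_with_counts])
    (auto simp: constrained_colourings_def)

lemma card_constrained_colourings_split:
  assumes "finite V"
  shows "card (constrained_colourings V D S \<alpha>) =
    card (constrained_colourings V (insert e D) S \<alpha>) + card (constrained_colourings V D (insert e S) \<alpha>)"
proof -
  have "constrained_colourings V D S \<alpha> =
      constrained_colourings V (insert e D) S \<alpha> \<union> constrained_colourings V D (insert e S) \<alpha>"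
    "constrained_colourings V (insert e D) S \<alpha> \<inter> constrained_colourings V D (insert e S) \<alpha> = {}"
    by (cases e; auto simp: constrained_colourings_def)+
  then show ?thesis
    by (simp add: card_Un_disjoint finite_constrained_colourings assms)
qed

lemma has_colour_counts_pullback:
  assumes "bij_betw \<phi> V V'"
  shows "has_colour_counts V (\<kappa> \<circ> \<phi>) \<alpha> \<longleftrightarrow> has_colour_counts V' \<kappa> \<alpha>"
proof -
  have "card {v\<in>V'. \<kappa> v = i} = card {v\<in>V. \<kappa> (\<phi> v) = i}" for i
  proof -
    have "{v\<in>V'. \<kappa> v = i} = \<phi> ` {v\<in>V. \<kappa> (\<phi> v) = i}"
      using assms by (auto simp: bij_betw_def)
    moreover have "inj_on \<phi> {v\<in>V. \<kappa> (\<phi> v) = i}"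
      using assms by (auto simp: bij_betw_def intro: inj_on_subset)
    ultimately show ?thesis
      by (simp add: card_image)
  qed
  then show ?thesis by (simp add: has_colour_counts_def)
qed

lemma restrict_comp_in_constrained_colourings:
  assumes bij: "bij_betw \<phi> V V'" and "P \<subseteq> V \<times> V" "Q \<subseteq> V \<times> V"
    and "\<kappa> \<in> constrained_colourings V' (map_prod \<phi> \<phi> ` P) (map_prod \<phi> \<phi> ` Q) \<alpha>"
  shows "restrict (\<kappa> \<circ> \<phi>) V \<in> constrained_colourings V P Q \<alpha>"
proof -
  have "{v\<in>V. restrict (\<kappa> \<circ> \<phi>) V v = i} = {v\<in>V. (\<kappa> \<circ> \<phi>) v = i}" for i
    by auto
  then have "has_colour_counts V (restrict (\<kappa> \<circ> \<phi>) V) \<alpha> \<longleftrightarrow> has_colour_counts V (\<kappa> \<circ> \<phi>) \<alpha>"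
    by (simp add: has_colour_counts_def)
  then show ?thesis
    using assms has_colour_counts_pullback[OF bij]
    by (fastforce simp: constrained_colourings_def subset_iff)
qed

lemma inj_on_restrict_comp:
  assumes "\<phi> ` V = V'"
  shows "inj_on (\<lambda>\<kappa>. restrict (\<kappa> \<circ> \<phi>) V) (V' \<rightarrow>\<^sub>E A)"
proof (rule inj_onI)
  fix \<kappa> \<kappa>' assume \<kappa>: "\<kappa> \<in> V' \<rightarrow>\<^sub>E A" "\<kappa>' \<in> V' \<rightarrow>\<^sub>E A"
    and eq: "restrict (\<kappa> \<circ> \<phi>) V = restrict (\<kappa>' \<circ> \<phi>) V"
  show "\<kappa> = \<kappa>'"
  proof (rule extensionalityI[of _ V'])
    fix x assume "x \<in> V'"
    then obtain y where "y \<in> V" "x = \<phi> y"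
      using assms by auto
    then show "\<kappa> x = \<kappa>' x"
      using fun_cong[OF eq, of y] by simp
  qed (use \<kappa> in \<open>auto simp: PiE_def\<close>)
qed

lemma card_constrained_colourings_bij:
  assumes fin: "finite V" and bij: "bij_betw \<phi> V V'"
    and PV: "P \<subseteq> V \<times> V" and QV: "Q \<subseteq> V \<times> V"
  shows "card (constrained_colourings V' (map_prod \<phi> \<phi> ` P) (map_prod \<phi> \<phi> ` Q) \<alpha>) =
    card (constrained_colourings V P Q \<alpha>)"
proof (rule card_bij_eq)
  let ?\<psi> = "inv_into V \<phi>"
  have bij': "bij_betw ?\<psi> V' V"
    using bij by (rule bij_betw_inv_into)
  have inv_image_pairs: "map_prod ?\<psi> ?\<psi> ` map_prod \<phi> \<phi> ` R = R" if "R \<subseteq> V \<times> V" for R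
    using that bij by (force simp: bij_betw_def image_image)
  have sub: "constrained_colourings W D S \<alpha> \<subseteq> W \<rightarrow>\<^sub>E UNIV" for W D S
    by (auto simp: constrained_colourings_def)
  show "inj_on (\<lambda>\<kappa>. restrict (\<kappa> \<circ> \<phi>) V)
      (constrained_colourings V' (map_prod \<phi> \<phi> ` P) (map_prod \<phi> \<phi> ` Q) \<alpha>)"
    using bij by (auto simp: bij_betw_def intro: inj_on_subset[OF inj_on_restrict_comp sub])
  show "inj_on (\<lambda>\<kappa>. restrict (\<kappa> \<circ> ?\<psi>) V') (constrained_colourings V P Q \<alpha>)"
    using bij' by (auto simp: bij_betw_def intro: inj_on_subset[OF inj_on_restrict_comp sub])
  show "(\<lambda>\<kappa>. restrict (\<kappa> \<circ> \<phi>) V) `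
      constrained_colourings V' (map_prod \<phi> \<phi> ` P) (map_prod \<phi> \<phi> ` Q) \<alpha>
      \<subseteq> constrained_colourings V P Q \<alpha>"
    using restrict_comp_in_constrained_colourings[OF bij PV QV] by blast
  have "map_prod \<phi> \<phi> ` R \<subseteq> V' \<times> V'" if "R \<subseteq> V \<times> V" for R
    using that bij by (auto simp: bij_betw_def)
  then show "(\<lambda>\<kappa>. restrict (\<kappa> \<circ> ?\<psi>) V') ` constrained_colourings V P Q \<alpha>
      \<subseteq> constrained_colourings V' (map_prod \<phi> \<phi> ` P) (map_prod \<phi> \<phi> ` Q) \<alpha>"
    using restrict_comp_in_constrained_colourings[OF bij', of "map_prod \<phi> \<phi> ` P" "map_prod \<phi> \<phi> ` Q"]
      inv_image_pairs PV QV by auto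
  show "finite (constrained_colourings V P Q \<alpha>)"
    using fin by (rule finite_constrained_colourings)
  show "finite (constrained_colourings V' (map_prod \<phi> \<phi> ` P) (map_prod \<phi> \<phi> ` Q) \<alpha>)"
    using fin bij by (simp add: finite_constrained_colourings bij_betw_finite)
qed

section \<open>Path forests\<close>

definition path_edges :: "nat list \<Rightarrow> ((nat \<times> nat) \<times> (nat \<times> nat)) set" where
  "path_edges lam = {((j, i), (j, Suc i)) | j i. j < length lam \<and> Suc i < lam ! j}"

lemma mem_path_forest_V [simp]: "(j, i) \<in> path_forest_V lam \<longleftrightarrow> j < length lam \<and> i < lam ! j"
  by (simp add: path_forest_V_def)

lemma path_forest_V_eq_UN: "path_forest_V lam = (\<Union>j<length lam. {j} \<times> {..<lam ! j})"
  by auto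

lemma finite_path_forest_V [simp]: "finite (path_forest_V lam)"
  by (simp add: path_forest_V_eq_UN)

lemma card_path_forest_V: "card (path_forest_V lam) = sum_list lam"
proof -
  have "card (path_forest_V lam) = (\<Sum>j<length lam. card ({j} \<times> {..<lam ! j}))"
    unfolding path_forest_V_eq_UN by (rule card_UN_disjoint) auto
  also have "\<dots> = sum_list lam"
    by (simp add: sum_list_sum_nth atLeast0LessThan)
  finally show ?thesis .
qed

lemma path_edges_subset: "path_edges lam \<subseteq> path_forest_V lam \<times> path_forest_V lam"
  by (auto simp: path_edges_def)

lemma length_le_sum_list: "\<forall>m\<in>set lam. 0 < m \<Longrightarrow> length lam \<le> sum_list lam"
  by (induction lam) (auto simp: Suc_le_eq)

lemma card_path_edges:
  assumes "\<forall>m\<in>set lam. 0 < m"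
  shows "card (path_edges lam) = sum_list lam - length lam"
proof -
  let ?short = "map (\<lambda>m. m - 1) lam"
  have "path_edges lam = (\<lambda>(j, i). ((j, i), (j, Suc i))) ` path_forest_V ?short"
    by (force simp: path_edges_def)
  moreover have "inj_on (\<lambda>(j, i). ((j, i), (j, Suc i))) (path_forest_V ?short)"
    by (auto simp: inj_on_def)
  moreover have "sum_list ?short = sum_list lam - length lam"
    using assms by (induction lam) (auto simp: length_le_sum_list)
  ultimately show ?thesis
    by (simp add: card_image card_path_forest_V)
qed

lemma X_path_eq_card:
  "X_path lam \<alpha> = of_nat (card (constrained_colourings (path_forest_V lam) (path_edges lam) {} \<alpha>))"
proof -
  have "(\<forall>u\<in>path_forest_V lam. \<forall>v\<in>path_forest_V lam. path_forest_E lam u v \<longrightarrow> \<kappa> u \<noteq> \<kappa> v)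
      \<longleftrightarrow> (\<forall>(u, w)\<in>path_edges lam. \<kappa> u \<noteq> \<kappa> w)" for \<kappa> :: "nat \<times> nat \<Rightarrow> nat"
    unfolding path_forest_E_def path_edges_def
    by (auto simp: Suc_less_eq2) (metis Suc_lessD)+
  then show ?thesis
    by (simp add: X_path_def chromatic_def constrained_colourings_def has_colour_counts_def)
qed

section \<open>Labelled path forests\<close>

text \<open>A labelled path forest \<open>cs\<close> has components with \<open>length (cs ! j) + 1\<close> vertices; the edge
  from \<open>(j, i)\<close> to \<open>(j, i + 1)\<close> carries the label \<open>cs ! j ! i\<close>, where \<open>True\<close> demands equal
  and \<open>False\<close> distinct colours at its ends.\<close>

definition lpf_sizes :: "bool list list \<Rightarrow> nat list" where
  "lpf_sizes cs = map (\<lambda>c. Suc (length c)) cs"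

definition lpf_edges :: "bool \<Rightarrow> bool list list \<Rightarrow> ((nat \<times> nat) \<times> (nat \<times> nat)) set" where
  "lpf_edges b cs = {((j, i), (j, Suc i)) | j i. j < length cs \<and> i < length (cs ! j) \<and> cs ! j ! i = b}"

definition lpf_count :: "bool list list \<Rightarrow> monomial \<Rightarrow> nat" where
  "lpf_count cs \<alpha> = card (constrained_colourings (path_forest_V (lpf_sizes cs))
     (lpf_edges False cs) (lpf_edges True cs) \<alpha>)"

lemma length_lpf_sizes [simp]: "length (lpf_sizes cs) = length cs"
  by (simp add: lpf_sizes_def)

lemma nth_lpf_sizes [simp]: "j < length cs \<Longrightarrow> lpf_sizes cs ! j = Suc (length (cs ! j))"
  by (simp add: lpf_sizes_def)

lemma lpf_sizes_pos: "\<forall>m\<in>set (lpf_sizes cs). 0 < m"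
  by (simp add: lpf_sizes_def)

lemma lpf_edges_subset: "lpf_edges b cs \<subseteq> path_forest_V (lpf_sizes cs) \<times> path_forest_V (lpf_sizes cs)"
  by (auto simp: lpf_edges_def)

lemma finite_lpf_edges: "finite (lpf_edges b cs)"
  using lpf_edges_subset by (rule finite_subset) simp

lemma lpf_edges_other_if_empty:
  assumes "lpf_edges b cs = {}"
  shows "lpf_edges (\<not> b) cs = path_edges (lpf_sizes cs)"
  using assms by (fastforce simp: lpf_edges_def path_edges_def)

definition uniform_labels :: "bool \<Rightarrow> nat list \<Rightarrow> bool list list" where
  "uniform_labels b lam = map (\<lambda>m. replicate (m - 1) b) lam"

lemma length_uniform_labels [simp]: "length (uniform_labels b lam) = length lam"
  by (simp add: uniform_labels_def)

lemma lpf_sizes_uniform_labels: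
  "\<forall>m\<in>set lam. 0 < m \<Longrightarrow> lpf_sizes (uniform_labels b lam) = lam"
  by (induction lam) (auto simp: lpf_sizes_def uniform_labels_def)

lemma lpf_edges_uniform_labels: "lpf_edges (\<not> b) (uniform_labels b lam) = {}"
  by (auto simp: lpf_edges_def uniform_labels_def)

lemma lpf_count_uniform_labels:
  assumes "\<forall>m\<in>set lam. 0 < m"
  shows "lpf_count (uniform_labels False lam) \<alpha> =
      card (constrained_colourings (path_forest_V lam) (path_edges lam) {} \<alpha>)"
    and "lpf_count (uniform_labels True lam) \<alpha> =
      card (constrained_colourings (path_forest_V lam) {} (path_edges lam) \<alpha>)"
  using lpf_edges_other_if_empty[OF lpf_edges_uniform_labels, of False lam]
    lpf_edges_other_if_empty[OF lpf_edges_uniform_labels, of True lam]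
    lpf_edges_uniform_labels[of False lam] lpf_edges_uniform_labels[of True lam]
  by (simp_all add: lpf_count_def lpf_sizes_uniform_labels[OF assms])

locale lpf_edge =
  fixes cs :: "bool list list" and j i :: nat
  assumes j: "j < length cs" and i: "i < length (cs ! j)"
begin

definition edge :: "(nat \<times> nat) \<times> (nat \<times> nat)" where
  "edge = ((j, i), (j, Suc i))"

definition edge_label :: bool where
  "edge_label = cs ! j ! i"

definition cut_forest :: "bool list list" where
  "cut_forest = cs[j := take i (cs ! j)] @ [drop (Suc i) (cs ! j)]"

definition flip_forest :: "bool list list" where
  "flip_forest = cs[j := (cs ! j)[i := \<not> edge_label]]"

definition cut_shift :: "nat \<times> nat \<Rightarrow> nat \<times> nat" where
  "cut_shift = (\<lambda>(a, b). if a = j \<and> i < b then (length cs, b - Suc i) else (a, b))"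

lemma length_cut_forest [simp]: "length cut_forest = Suc (length cs)"
  by (simp add: cut_forest_def)

lemma nth_cut_forest:
  "a < Suc (length cs) \<Longrightarrow> cut_forest ! a =
    (if a = length cs then drop (Suc i) (cs ! j) else if a = j then take i (cs ! j) else cs ! a)"
  using j by (auto simp: cut_forest_def nth_append)

lemma bij_cut_shift: "bij_betw cut_shift (path_forest_V (lpf_sizes cs)) (path_forest_V (lpf_sizes cut_forest))"
proof (rule bij_betw_imageI)
  show "inj_on cut_shift (path_forest_V (lpf_sizes cs))"
    by (rule inj_onI) (auto simp: cut_shift_def split: if_splits)
  have "(a, b) \<in> cut_shift ` path_forest_V (lpf_sizes cs)"
    if "(a, b) \<in> path_forest_V (lpf_sizes cut_forest)" for a b
  proof (cases "a = length cs")
    case True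
    then have "(j, b + Suc i) \<in> path_forest_V (lpf_sizes cs)" "cut_shift (j, b + Suc i) = (a, b)"
      using that i j by (auto simp: nth_cut_forest cut_shift_def)
    then show ?thesis by (metis image_eqI)
  next
    case False
    then have "(a, b) \<in> path_forest_V (lpf_sizes cs)" "cut_shift (a, b) = (a, b)"
      using that i j by (auto simp: nth_cut_forest cut_shift_def split: if_splits)
    then show ?thesis by (metis image_eqI)
  qed
  then show "cut_shift ` path_forest_V (lpf_sizes cs) = path_forest_V (lpf_sizes cut_forest)"
    using i j by (force simp: cut_shift_def nth_cut_forest)
qed

lemma sum_list_lpf_sizes_cut_forest: "sum_list (lpf_sizes cut_forest) = sum_list (lpf_sizes cs)"
  using bij_betw_same_card[OF bij_cut_shift] by (simp add: card_path_forest_V)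

lemma cut_shift_lpf_edges: "map_prod cut_shift cut_shift ` (lpf_edges b cs - {edge}) = lpf_edges b cut_forest"
proof
  show "map_prod cut_shift cut_shift ` (lpf_edges b cs - {edge}) \<subseteq> lpf_edges b cut_forest"
  proof
    fix y assume "y \<in> map_prod cut_shift cut_shift ` (lpf_edges b cs - {edge})"
    then obtain a m where y: "y = map_prod cut_shift cut_shift ((a, m), (a, Suc m))"
      and a: "a < length cs" and m: "m < length (cs ! a)" and lb: "cs ! a ! m = b"
      and ne: "((a, m), (a, Suc m)) \<noteq> edge"
      by (auto simp: lpf_edges_def)
    consider "a \<noteq> j" | "a = j" "m < i" | "a = j" "i < m"
      using ne unfolding edge_def by fastforce
    then show "y \<in> lpf_edges b cut_forest"
    proof cases
      case 3
      then have "y = ((length cs, m - Suc i), (length cs, Suc (m - Suc i)))"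
        using y by (auto simp: cut_shift_def)
      then show ?thesis
        using 3 m lb by (auto simp: lpf_edges_def nth_cut_forest)
    qed (use y a m lb in \<open>auto simp: cut_shift_def lpf_edges_def nth_cut_forest\<close>)
  qed
  show "lpf_edges b cut_forest \<subseteq> map_prod cut_shift cut_shift ` (lpf_edges b cs - {edge})"
  proof
    fix y assume "y \<in> lpf_edges b cut_forest"
    then obtain a m where y: "y = ((a, m), (a, Suc m))" and a: "a < Suc (length cs)"
      and m: "m < length (cut_forest ! a)" and lb: "cut_forest ! a ! m = b"
      by (auto simp: lpf_edges_def)
    show "y \<in> map_prod cut_shift cut_shift ` (lpf_edges b cs - {edge})"
    proof (cases "a = length cs")
      case True
      let ?z = "((j, m + Suc i), (j, Suc (m + Suc i)))"
      have "?z \<in> lpf_edges b cs - {edge}" "map_prod cut_shift cut_shift ?z = y"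
        using True y m lb i j by (auto simp: lpf_edges_def nth_cut_forest edge_def cut_shift_def add.commute)
      then show ?thesis by (metis image_eqI)
    next
      case False
      then have "y \<in> lpf_edges b cs - {edge}" "map_prod cut_shift cut_shift y = y"
        using a y m lb i by (auto simp: lpf_edges_def nth_cut_forest edge_def cut_shift_def split: if_splits)
      then show ?thesis by (metis image_eqI)
    qed
  qed
qed

lemma edge_in_lpf_edges: "edge \<in> lpf_edges edge_label cs"
  using i j by (auto simp: lpf_edges_def edge_def edge_label_def)

lemma card_lpf_edges_edge_label_pos: "0 < card (lpf_edges edge_label cs)"
  using edge_in_lpf_edges finite_lpf_edges card_gt_0_iff by blast

lemma edge_notin_lpf_edges: "edge \<notin> lpf_edges (\<not> edge_label) cs"
  by (auto simp: lpf_edges_def edge_def edge_label_def)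

lemma card_lpf_edges_cut_forest: "card (lpf_edges b cut_forest) = card (lpf_edges b cs - {edge})"
proof -
  have "inj_on (map_prod cut_shift cut_shift)
      (path_forest_V (lpf_sizes cs) \<times> path_forest_V (lpf_sizes cs))"
    using bij_cut_shift by (auto simp: bij_betw_def intro: map_prod_inj_on)
  then have "inj_on (map_prod cut_shift cut_shift) (lpf_edges b cs - {edge})"
    by (rule inj_on_subset) (use lpf_edges_subset in blast)
  then show ?thesis
    by (metis card_image cut_shift_lpf_edges)
qed

lemma length_flip_forest [simp]: "length flip_forest = length cs"
  by (simp add: flip_forest_def)

lemma lpf_sizes_flip_forest: "lpf_sizes flip_forest = lpf_sizes cs"
  by (simp add: lpf_sizes_def flip_forest_def map_update)
    (metis j length_list_update list_update_id map_update)

lemma lpf_edges_flip_forest: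
  "lpf_edges b flip_forest = (if b = edge_label then lpf_edges b cs - {edge} else insert edge (lpf_edges b cs))"
proof -
  have len_nth: "a < length cs \<Longrightarrow> length (flip_forest ! a) = length (cs ! a)" for a
    using j by (simp add: flip_forest_def nth_list_update)
  have nth: "flip_forest ! a ! m = (if a = j \<and> m = i then \<not> cs ! j ! i else cs ! a ! m)"
    if "a < length cs" for a m
    using that i j by (simp add: flip_forest_def edge_label_def nth_list_update)
  show ?thesis
    unfolding lpf_edges_def length_flip_forest using i j
    by (auto simp: len_nth nth edge_def edge_label_def split: if_splits)
qed

lemma card_lpf_edges_edge_label_decrease:
  "card (lpf_edges edge_label cut_forest) = card (lpf_edges edge_label cs) - 1"
  "card (lpf_edges edge_label flip_forest) = card (lpf_edges edge_label cs) - 1"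
  using edge_in_lpf_edges
  by (simp_all add: card_lpf_edges_cut_forest lpf_edges_flip_forest finite_lpf_edges)

lemma lpf_count_cut_forest: "lpf_count cut_forest \<alpha> = lpf_count cs \<alpha> + lpf_count flip_forest \<alpha>"
proof -
  let ?V = "path_forest_V (lpf_sizes cs)"
  let ?D = "lpf_edges False cs - {edge}" and ?S = "lpf_edges True cs - {edge}"
  have "lpf_count cut_forest \<alpha> = card (constrained_colourings ?V ?D ?S \<alpha>)"
    unfolding lpf_count_def cut_shift_lpf_edges[symmetric]
    by (rule card_constrained_colourings_bij[OF _ bij_cut_shift]) (use lpf_edges_subset in auto)
  also have "\<dots> = card (constrained_colourings ?V (insert edge ?D) ?S \<alpha>) +
      card (constrained_colourings ?V ?D (insert edge ?S) \<alpha>)"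
    by (rule card_constrained_colourings_split) simp
  also have "\<dots> = lpf_count cs \<alpha> + lpf_count flip_forest \<alpha>"
    using edge_in_lpf_edges edge_notin_lpf_edges
    by (cases edge_label) (simp_all add: lpf_count_def lpf_sizes_flip_forest lpf_edges_flip_forest insert_absorb)
  finally show ?thesis .
qed

end

section \<open>The span of the path chromatic functions\<close>

definition in_path_span :: "series \<Rightarrow> bool" where
  "in_path_span f \<longleftrightarrow> (\<exists>a. is_path_expansion a f)"

lemma in_path_span_diff:
  assumes "in_path_span f" "in_path_span g"
  shows "in_path_span (\<lambda>\<alpha>. f \<alpha> - g \<alpha>)"
proof -
  obtain a b where a: "is_path_expansion a f" and b: "is_path_expansion b g"
    using assms by (auto simp: in_path_span_def)
  let ?A = "{\<mu>. a \<mu> \<noteq> 0}" and ?B = "{\<mu>. b \<mu> \<noteq> 0}" and ?C = "{\<mu>. a \<mu> - b \<mu> \<noteq> 0}"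
  have fin: "finite (?A \<union> ?B)" and C_sub: "?C \<subseteq> ?A \<union> ?B"
    using a b by (auto simp: is_path_expansion_def)
  have "f \<alpha> = (\<Sum>\<mu>\<in>?A \<union> ?B. a \<mu> * X_path \<mu> \<alpha>)" "g \<alpha> = (\<Sum>\<mu>\<in>?A \<union> ?B. b \<mu> * X_path \<mu> \<alpha>)"
    "(\<Sum>\<mu>\<in>?C. (a \<mu> - b \<mu>) * X_path \<mu> \<alpha>) = (\<Sum>\<mu>\<in>?A \<union> ?B. (a \<mu> - b \<mu>) * X_path \<mu> \<alpha>)" for \<alpha>
    using a b fin C_sub unfolding is_path_expansion_def by (auto intro!: sum.mono_neutral_left)
  then have "is_path_expansion (\<lambda>\<mu>. a \<mu> - b \<mu>) (\<lambda>\<alpha>. f \<alpha> - g \<alpha>)"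
    using a b fin C_sub
    by (auto simp: is_path_expansion_def sum_subtractf left_diff_distrib intro: finite_subset)
  then show ?thesis
    by (auto simp: in_path_span_def)
qed

lemma X_path_permute_list:
  assumes p: "p permutes {..<length \<mu>}"
  shows "X_path (permute_list p \<mu>) = X_path \<mu>"
proof
  fix \<alpha>
  let ?\<nu> = "permute_list p \<mu>"
  define \<phi> where "\<phi> = (\<lambda>(a::nat, b::nat). (p a, b))"
  have p_lt: "a < length \<mu> \<Longrightarrow> p a < length \<mu>" for a
    using permutes_in_image[OF p] by simp
  have inv_lt: "a < length \<mu> \<Longrightarrow> inv p a < length \<mu>" for a
    using permutes_in_image[OF permutes_inv[OF p]] by simp
  have nth_\<nu>: "a < length \<mu> \<Longrightarrow> ?\<nu> ! a = \<mu> ! p a" for a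
    using p by (simp add: permute_list_nth)
  have bij: "bij_betw \<phi> (path_forest_V ?\<nu>) (path_forest_V \<mu>)"
    by (rule bij_betw_byWitness[where f' = "\<lambda>(a, b). (inv p a, b)"])
      (auto simp: \<phi>_def p_lt inv_lt nth_\<nu> permutes_inverses[OF p])
  have "map_prod \<phi> \<phi> ` path_edges ?\<nu> = path_edges \<mu>"
  proof (intro equalityI subsetI)
    fix x assume "x \<in> path_edges \<mu>"
    then obtain a b where x: "x = ((a, b), (a, Suc b))" "a < length \<mu>" "Suc b < \<mu> ! a"
      by (auto simp: path_edges_def)
    then have "((inv p a, b), (inv p a, Suc b)) \<in> path_edges ?\<nu>"
      by (auto simp: path_edges_def inv_lt nth_\<nu> permutes_inverses[OF p])
    then show "x \<in> map_prod \<phi> \<phi> ` path_edges ?\<nu>"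
      using x by (force simp: \<phi>_def permutes_inverses[OF p])
  qed (auto simp: path_edges_def \<phi>_def p_lt nth_\<nu>)
  then show "X_path ?\<nu> \<alpha> = X_path \<mu> \<alpha>"
    using card_constrained_colourings_bij[OF finite_path_forest_V bij path_edges_subset, of "{}" \<alpha>]
    by (simp add: X_path_eq_card)
qed

lemma in_path_span_X_path:
  assumes "\<forall>m\<in>set \<mu>. 0 < m"
  shows "in_path_span (X_path \<mu>)"
proof -
  let ?\<nu> = "rev (sort \<mu>)"
  obtain p where p: "p permutes {..<length \<mu>}" "permute_list p \<mu> = ?\<nu>"
    by (metis mset_eq_permutation mset_rev mset_sort)
  have "is_partition ?\<nu>"
    using assms by (simp add: is_partition_def sorted_wrt_rev)
  then have "is_path_expansion (\<lambda>\<eta>. if \<eta> = ?\<nu> then 1 else 0) (X_path \<mu>)"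
    using X_path_permute_list[OF p(1)] p(2) by (simp add: is_path_expansion_def)
  then show ?thesis
    by (auto simp: in_path_span_def)
qed

lemma in_path_span_lpf_count: "in_path_span (\<lambda>\<alpha>. of_nat (lpf_count cs \<alpha>))"
proof (induction "card (lpf_edges True cs)" arbitrary: cs rule: less_induct)
  case less
  show ?case
  proof (cases "lpf_edges True cs = {}")
    case True
    then have "(\<lambda>\<alpha>. of_nat (lpf_count cs \<alpha>)) = X_path (lpf_sizes cs)"
      using lpf_edges_other_if_empty[OF True] by (simp add: lpf_count_def X_path_eq_card fun_eq_iff)
    then show ?thesis
      using in_path_span_X_path[OF lpf_sizes_pos] by simp
  next
    case False
    then obtain j i where "j < length cs" "i < length (cs ! j)" "cs ! j ! i"
      by (auto simp: lpf_edges_def)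
    then interpret lpf_edge cs j i
      by unfold_locales
    have label: edge_label
      using \<open>cs ! j ! i\<close> by (simp add: edge_label_def)
    have "card (lpf_edges True cut_forest) < card (lpf_edges True cs)"
      "card (lpf_edges True flip_forest) < card (lpf_edges True cs)"
      using card_lpf_edges_edge_label_decrease card_lpf_edges_edge_label_pos label by simp_all
    then have "in_path_span (\<lambda>\<alpha>. of_nat (lpf_count cut_forest \<alpha>) - of_nat (lpf_count flip_forest \<alpha>))"
      using less by (intro in_path_span_diff)
    then show ?thesis
      by (simp add: lpf_count_cut_forest)
  qed
qed

section \<open>Power sums as colourings constant on paths\<close>

lemma finite_pairs_add_eq: "finite {(\<beta>::monomial, \<gamma>). \<beta> + \<gamma> = \<alpha>}"
proof -
  let ?B = "{\<beta>::monomial. \<exists>\<gamma>. \<beta> + \<gamma> = \<alpha>}"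
  let ?r = "\<lambda>\<beta>. restrict (Poly_Mapping.lookup \<beta>) (Poly_Mapping.keys \<alpha>)"
  have le: "Poly_Mapping.lookup \<beta> i \<le> Poly_Mapping.lookup \<alpha> i" if "\<beta> \<in> ?B" for \<beta> i
    using that by (auto simp: lookup_add)
  have "inj_on ?r ?B"
  proof (rule inj_onI)
    fix \<beta> \<beta>' assume "\<beta> \<in> ?B" "\<beta>' \<in> ?B" "?r \<beta> = ?r \<beta>'"
    then show "\<beta> = \<beta>'"
      using le[of \<beta>] le[of \<beta>'] by (intro poly_mapping_eqI) (metis in_keys_iff le_zero_eq restrict_apply')
  qed
  moreover have "?r ` ?B \<subseteq> (\<Pi>\<^sub>E i\<in>Poly_Mapping.keys \<alpha>. {..Poly_Mapping.lookup \<alpha> i})"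
    using le by auto
  ultimately have "finite ?B"
    by (rule inj_on_finite) (simp add: finite_PiE)
  moreover have "{(\<beta>, \<gamma>). \<beta> + \<gamma> = \<alpha>} = (\<lambda>\<beta>. (\<beta>, \<alpha> - \<beta>)) ` ?B"
    by (auto simp: image_def)
  ultimately show ?thesis
    by simp
qed

lemma single_add_eq_iff:
  fixes \<alpha> \<gamma> :: monomial
  shows "Poly_Mapping.single i m + \<gamma> = \<alpha> \<longleftrightarrow>
    m \<le> Poly_Mapping.lookup \<alpha> i \<and> \<gamma> = \<alpha> - Poly_Mapping.single i m"
proof
  assume "m \<le> Poly_Mapping.lookup \<alpha> i \<and> \<gamma> = \<alpha> - Poly_Mapping.single i m"
  then show "Poly_Mapping.single i m + \<gamma> = \<alpha>"
    by (intro poly_mapping_eqI) (auto simp: lookup_add lookup_minus lookup_single when_def)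
qed (auto simp: lookup_add)

lemma single_eq_single_iff:
  "0 < m \<Longrightarrow> Poly_Mapping.single i m = Poly_Mapping.single i' (m::nat) \<longleftrightarrow> i = i'"
  by (metis lookup_single_eq lookup_single_not_eq not_gr_zero)

lemma power_sum_part_Cons:
  assumes m: "0 < m"
  shows "power_sum_part (m # lam) \<alpha> =
    (\<Sum>i | m \<le> Poly_Mapping.lookup \<alpha> i. power_sum_part lam (\<alpha> - Poly_Mapping.single i m))"
proof -
  let ?I = "{i. m \<le> Poly_Mapping.lookup \<alpha> i}"
  let ?h = "\<lambda>i. (Poly_Mapping.single i m, \<alpha> - Poly_Mapping.single i m)"
  let ?t = "\<lambda>(\<beta>, \<gamma>). power_sum m \<beta> * power_sum_part lam \<gamma>"
  have "power_sum_part (m # lam) \<alpha> = (\<Sum>x\<in>{(\<beta>, \<gamma>). \<beta> + \<gamma> = \<alpha>}. ?t x)"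
    by (simp add: power_sum_part_def series_mult_def)
  also have "\<dots> = (\<Sum>x\<in>?h ` ?I. ?t x)"
  proof (rule sum.mono_neutral_right[OF finite_pairs_add_eq])
    show "?h ` ?I \<subseteq> {(\<beta>, \<gamma>). \<beta> + \<gamma> = \<alpha>}"
      by (auto simp: single_add_eq_iff)
    have "(Poly_Mapping.single i m, \<gamma>) \<in> ?h ` ?I" if "Poly_Mapping.single i m + \<gamma> = \<alpha>" for i \<gamma>
      using that by (auto simp: single_add_eq_iff)
    then show "\<forall>x\<in>{(\<beta>, \<gamma>). \<beta> + \<gamma> = \<alpha>} - ?h ` ?I. ?t x = 0"
      by (auto simp: power_sum_def)
  qed
  also have "\<dots> = (\<Sum>i\<in>?I. power_sum_part lam (\<alpha> - Poly_Mapping.single i m))"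
    using m by (subst sum.reindex) (auto simp: inj_on_def power_sum_def single_eq_single_iff)
  finally show ?thesis .
qed

text \<open>An assignment of colours \<open>ys\<close> to the parts of \<open>lam\<close> contributes the monomial
  \<open>x_(ys_1)^(lam_1) \<cdot>\<cdot>\<cdot> x_(ys_l)^(lam_l)\<close> to \<open>p_lam\<close>.\<close>

definition assignment_monomial :: "nat list \<Rightarrow> nat list \<Rightarrow> monomial" where
  "assignment_monomial ys lam = sum_list (map (\<lambda>(i, m). Poly_Mapping.single i m) (zip ys lam))"

lemma assignment_monomial_Cons [simp]:
  "assignment_monomial (i # ys) (m # lam) = Poly_Mapping.single i m + assignment_monomial ys lam"
  by (simp add: assignment_monomial_def)

definition assignments :: "nat list \<Rightarrow> monomial \<Rightarrow> nat list set" where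
  "assignments lam \<alpha> = {ys. length ys = length lam \<and> assignment_monomial ys lam = \<alpha>}"

lemma assignments_Cons:
  "assignments (m # lam) \<alpha> =
    (\<Union>i\<in>{i. m \<le> Poly_Mapping.lookup \<alpha> i}. Cons i ` assignments lam (\<alpha> - Poly_Mapping.single i m))"
proof (intro equalityI subsetI)
  fix xs assume "xs \<in> assignments (m # lam) \<alpha>"
  then obtain i ys where "xs = i # ys" "length ys = length lam"
    "Poly_Mapping.single i m + assignment_monomial ys lam = \<alpha>"
    by (cases xs) (auto simp: assignments_def)
  then show "xs \<in> (\<Union>i\<in>{i. m \<le> Poly_Mapping.lookup \<alpha> i}.
      Cons i ` assignments lam (\<alpha> - Poly_Mapping.single i m))"
    by (auto simp: assignments_def single_add_eq_iff)
qed (auto simp: assignments_def single_add_eq_iff)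

lemma lookup_assignment_monomial:
  "length ys = length lam \<Longrightarrow> Poly_Mapping.lookup (assignment_monomial ys lam) i =
    (\<Sum>j<length lam. if ys ! j = i then lam ! j else 0)"
proof (induction ys lam rule: list_induct2)
  case (Cons y ys m lam)
  have "(\<Sum>j<length (m # lam). if (y # ys) ! j = i then (m # lam) ! j else 0) =
      (if y = i then m else 0) + (\<Sum>j<length lam. if ys ! j = i then lam ! j else 0)"
    by (simp only: length_Cons sum.lessThan_Suc_shift nth_Cons_0 nth_Cons_Suc)
  then show ?case
    using Cons by (simp add: assignment_monomial_def lookup_add lookup_single when_def)
qed (simp add: assignment_monomial_def)

definition component_colouring :: "nat list \<Rightarrow> nat list \<Rightarrow> nat \<times> nat \<Rightarrow> nat" where
  "component_colouring lam ys = restrict (\<lambda>v. ys ! fst v) (path_forest_V lam)"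

lemma constant_on_path:
  assumes "\<forall>(u, w)\<in>path_edges lam. \<kappa> u = \<kappa> w" "j < length lam" "k < lam ! j"
  shows "\<kappa> (j, k) = \<kappa> (j, 0)"
  using assms(3)
proof (induction k)
  case (Suc k)
  then have "((j, k), (j, Suc k)) \<in> path_edges lam"
    using assms(2) by (auto simp: path_edges_def)
  then show ?case
    using Suc assms(1) by auto
qed simp

lemma bij_betw_component_colouring:
  assumes "\<forall>m\<in>set lam. 0 < m"
  shows "bij_betw (component_colouring lam) {ys. set ys \<subseteq> A \<and> length ys = length lam}
    {\<kappa> \<in> path_forest_V lam \<rightarrow>\<^sub>E A. \<forall>(u, w)\<in>path_edges lam. \<kappa> u = \<kappa> w}"
    (is "bij_betw _ ?L ?K")
proof (rule bij_betw_byWitness[where f' = "\<lambda>\<kappa>. map (\<lambda>j. \<kappa> (j, 0)) [0..<length lam]"])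
  have root: "j < length lam \<Longrightarrow> (j, 0) \<in> path_forest_V lam" for j
    using assms by simp
  show "\<forall>ys\<in>?L. map (\<lambda>j. component_colouring lam ys (j, 0)) [0..<length lam] = ys"
  proof (intro ballI nth_equalityI)
    fix ys j assume "ys \<in> ?L" "j < length (map (\<lambda>j. component_colouring lam ys (j, 0)) [0..<length lam])"
    then show "map (\<lambda>j. component_colouring lam ys (j, 0)) [0..<length lam] ! j = ys ! j"
      using root[of j] by (simp add: component_colouring_def)
  qed simp
  show "\<forall>\<kappa>\<in>?K. component_colouring lam (map (\<lambda>j. \<kappa> (j, 0)) [0..<length lam]) = \<kappa>"
  proof
    fix \<kappa> assume \<kappa>: "\<kappa> \<in> ?K"
    show "component_colouring lam (map (\<lambda>j. \<kappa> (j, 0)) [0..<length lam]) = \<kappa>"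
    proof (rule extensionalityI[of _ "path_forest_V lam"])
      fix v assume v: "v \<in> path_forest_V lam"
      obtain a b where ab: "v = (a, b)"
        by fastforce
      have "\<kappa> (a, b) = \<kappa> (a, 0)"
        using constant_on_path[of lam \<kappa> a b] \<kappa> v ab by simp
      then show "component_colouring lam (map (\<lambda>j. \<kappa> (j, 0)) [0..<length lam]) v = \<kappa> v"
        using v ab by (simp add: component_colouring_def)
    qed (use \<kappa> in \<open>simp_all add: component_colouring_def PiE_iff\<close>)
  qed
  show "component_colouring lam ` ?L \<subseteq> ?K"
    by (auto simp: component_colouring_def path_edges_def)
  have "\<kappa> (j, 0) \<in> A" if "\<kappa> \<in> ?K" "j < length lam" for \<kappa> j
    using that root by (auto simp: PiE_iff simp del: mem_path_forest_V)
  then show "(\<lambda>\<kappa>. map (\<lambda>j. \<kappa> (j, 0)) [0..<length lam]) ` ?K \<subseteq> ?L"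
    by auto
qed

lemma has_colour_counts_component_colouring:
  assumes "length ys = length lam"
  shows "has_colour_counts (path_forest_V lam) (component_colouring lam ys) (assignment_monomial ys lam)"
proof -
  have "{v \<in> path_forest_V lam. component_colouring lam ys v = i} =
      (\<Union>j\<in>{j. j < length lam \<and> ys ! j = i}. {j} \<times> {..<lam ! j})" for i
    by (auto simp: component_colouring_def)
  then have "card {v \<in> path_forest_V lam. component_colouring lam ys v = i} =
      (\<Sum>j<length lam. if ys ! j = i then lam ! j else 0)" for i
    by (simp add: card_UN_disjoint sum.If_cases Int_def)
  then show ?thesis
    using assms by (simp add: has_colour_counts_def lookup_assignment_monomial)
qed

lemma bij_betw_assignments:
  assumes "\<forall>m\<in>set lam. 0 < m"
  shows "bij_betw (component_colouring lam) (assignments lam \<alpha>)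
    (constrained_colourings (path_forest_V lam) {} (path_edges lam) \<alpha>)"
proof (rule bij_betw_subset[OF bij_betw_component_colouring[OF assms, of UNIV]])
  let ?V = "path_forest_V lam" and ?L = "{ys. set ys \<subseteq> UNIV \<and> length ys = length lam}"
  have "assignments lam \<alpha> = {ys \<in> ?L. has_colour_counts ?V (component_colouring lam ys) \<alpha>}"
    using has_colour_counts_component_colouring has_colour_counts_unique
    by (fastforce simp: assignments_def)
  then have "component_colouring lam ` assignments lam \<alpha> =
      {\<kappa> \<in> component_colouring lam ` ?L. has_colour_counts ?V \<kappa> \<alpha>}"
    by blast
  also have "\<dots> = constrained_colourings ?V {} (path_edges lam) \<alpha>"
    unfolding bij_betw_imp_surj_on[OF bij_betw_component_colouring[OF assms]]
    by (auto simp: constrained_colourings_def)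
  finally show "component_colouring lam ` assignments lam \<alpha> =
      constrained_colourings ?V {} (path_edges lam) \<alpha>" .
qed (auto simp: assignments_def)

lemma power_sum_part_eq_card_assignments:
  assumes "\<forall>m\<in>set lam. 0 < m"
  shows "power_sum_part lam \<alpha> = of_nat (card (assignments lam \<alpha>))"
  using assms
proof (induction lam arbitrary: \<alpha>)
  case Nil
  have "assignments [] \<alpha> = (if \<alpha> = 0 then {[]} else {})"
    by (auto simp: assignments_def assignment_monomial_def)
  then show ?case
    by (simp add: power_sum_part_def series_one_def)
next
  case (Cons m lam)
  let ?I = "{i. m \<le> Poly_Mapping.lookup \<alpha> i}"
  have m: "0 < m"
    using Cons.prems by simp
  have "?I \<subseteq> Poly_Mapping.keys \<alpha>"
    using m by (auto simp: in_keys_iff)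
  then have fin_I: "finite ?I"
    by (rule finite_subset) simp
  have fin: "finite (assignments lam \<beta>)" for \<beta>
    using bij_betw_finite[OF bij_betw_assignments] Cons.prems
    by (simp add: finite_constrained_colourings)
  have "card (assignments (m # lam) \<alpha>) =
      (\<Sum>i\<in>?I. card (Cons i ` assignments lam (\<alpha> - Poly_Mapping.single i m)))"
    unfolding assignments_Cons by (rule card_UN_disjoint[OF fin_I]; use fin in auto)
  also have "\<dots> = (\<Sum>i\<in>?I. card (assignments lam (\<alpha> - Poly_Mapping.single i m)))"
    by (simp add: card_image)
  finally have "card (assignments (m # lam) \<alpha>) =
      (\<Sum>i\<in>?I. card (assignments lam (\<alpha> - Poly_Mapping.single i m)))" .
  then show ?case
    using Cons by (simp add: power_sum_part_Cons[OF m])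
qed

lemma power_sum_part_eq_lpf_count:
  assumes "\<forall>m\<in>set lam. 0 < m"
  shows "power_sum_part lam \<alpha> = of_nat (lpf_count (uniform_labels True lam) \<alpha>)"
  using power_sum_part_eq_card_assignments[OF assms] bij_betw_same_card[OF bij_betw_assignments[OF assms]]
  by (simp add: lpf_count_uniform_labels[OF assms])

lemma in_path_span_power_sum_part:
  assumes "\<forall>m\<in>set lam. 0 < m"
  shows "in_path_span (power_sum_part lam)"
  using in_path_span_lpf_count[of "uniform_labels True lam"]
  by (simp add: power_sum_part_eq_lpf_count[OF assms, abs_def])

section \<open>Specialisation to finitely many variables equal to one\<close>

text \<open>Summing the coefficients of \<open>f\<close> over \<open>monomials_in k n\<close> evaluates the homogeneous part of
  degree \<open>n\<close> of \<open>f\<close> at \<open>x_0 = \<dots> = x_(k-1) = 1\<close> and \<open>x_i = 0\<close> for \<open>i \<ge> k\<close>.\<close>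

definition monomials_in :: "nat \<Rightarrow> nat \<Rightarrow> monomial set" where
  "monomials_in k n = {\<alpha>. Poly_Mapping.keys \<alpha> \<subseteq> {..<k} \<and> (\<Sum>i<k. Poly_Mapping.lookup \<alpha> i) = n}"

lemma finite_monomials_in: "finite (monomials_in k n)"
proof -
  let ?r = "\<lambda>\<alpha>. restrict (Poly_Mapping.lookup \<alpha>) {..<k}"
  have "inj_on ?r (monomials_in k n)"
  proof (rule inj_onI)
    fix \<alpha> \<beta> assume mem: "\<alpha> \<in> monomials_in k n" "\<beta> \<in> monomials_in k n" and eq: "?r \<alpha> = ?r \<beta>"
    show "\<alpha> = \<beta>"
    proof (rule poly_mapping_eqI)
      fix i
      show "Poly_Mapping.lookup \<alpha> i = Poly_Mapping.lookup \<beta> i"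
      proof (cases "i < k")
        case False
        then have "i \<notin> Poly_Mapping.keys \<alpha>" "i \<notin> Poly_Mapping.keys \<beta>"
          using mem by (auto simp: monomials_in_def)
        then show ?thesis
          by (simp add: in_keys_iff)
      qed (use fun_cong[OF eq, of i] in simp)
    qed
  qed
  moreover have "Poly_Mapping.lookup \<alpha> i \<le> n" if "\<alpha> \<in> monomials_in k n" "i < k" for \<alpha> i
    using that member_le_sum[of i "{..<k}" "Poly_Mapping.lookup \<alpha>"] by (simp add: monomials_in_def)
  then have "?r ` monomials_in k n \<subseteq> {..<k} \<rightarrow>\<^sub>E {..n}"
    by (intro image_subsetI) (simp add: Pi_def)
  ultimately show ?thesis
    by (rule inj_on_finite) (simp add: finite_PiE)
qed

lemma has_colour_counts_Abs_poly_mapping: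
  assumes "finite V"
  shows "has_colour_counts V \<kappa> (Abs_poly_mapping (\<lambda>i. card {v\<in>V. \<kappa> v = i}))"
proof -
  have "finite {i. card {v\<in>V. \<kappa> v = i} \<noteq> 0}"
    by (rule finite_subset[of _ "\<kappa> ` V"]) (use assms in \<open>auto simp: card_eq_0_iff\<close>)
  then show ?thesis
    by (simp add: has_colour_counts_def)
qed

lemma sum_colour_counts:
  assumes "finite V" "has_colour_counts V \<kappa> \<alpha>" "\<kappa> ` V \<subseteq> {..<k}"
  shows "(\<Sum>i<k. Poly_Mapping.lookup \<alpha> i) = card V"
proof -
  have "card V = card (\<Union>i<k. {v\<in>V. \<kappa> v = i})"
    using assms(3) by (intro arg_cong[where f = card]) auto
  also have "\<dots> = (\<Sum>i<k. card {v\<in>V. \<kappa> v = i})"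
    by (rule card_UN_disjoint) (use assms(1) in auto)
  finally have "card V = (\<Sum>i<k. card {v\<in>V. \<kappa> v = i})" .
  then show ?thesis
    using assms(2) by (simp add: has_colour_counts_def)
qed

lemma sum_card_colourings_monomials_in:
  assumes fin: "finite V"
  shows "(\<Sum>\<alpha>\<in>monomials_in k n. card {\<kappa> \<in> V \<rightarrow>\<^sub>E UNIV. \<Phi> \<kappa> \<and> has_colour_counts V \<kappa> \<alpha>}) =
    (if card V = n then card {\<kappa> \<in> V \<rightarrow>\<^sub>E {..<k}. \<Phi> \<kappa>} else 0)"
proof -
  let ?A = "\<lambda>\<alpha>. {\<kappa> \<in> V \<rightarrow>\<^sub>E UNIV. \<Phi> \<kappa> \<and> has_colour_counts V \<kappa> \<alpha>}"
  have "finite (?A \<alpha>)" for \<alpha>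
    by (rule finite_subset[OF _ finite_colourings_with_counts[OF fin]]) auto
  then have "(\<Sum>\<alpha>\<in>monomials_in k n. card (?A \<alpha>)) = card (\<Union>\<alpha>\<in>monomials_in k n. ?A \<alpha>)"
    by (intro card_UN_disjoint[symmetric] finite_monomials_in) (auto dest: has_colour_counts_unique)
  also have "(\<Union>\<alpha>\<in>monomials_in k n. ?A \<alpha>) =
      (if card V = n then {\<kappa> \<in> V \<rightarrow>\<^sub>E {..<k}. \<Phi> \<kappa>} else {})"
  proof (intro set_eqI iffI)
    fix \<kappa> assume "\<kappa> \<in> (\<Union>\<alpha>\<in>monomials_in k n. ?A \<alpha>)"
    then obtain \<alpha> where \<alpha>: "\<alpha> \<in> monomials_in k n" "\<kappa> \<in> V \<rightarrow>\<^sub>E UNIV" "\<Phi> \<kappa>" "has_colour_counts V \<kappa> \<alpha>"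
      by auto
    then have "\<kappa> ` V \<subseteq> {..<k}"
      using keys_colour_counts[OF fin] by (simp add: monomials_in_def)
    then show "\<kappa> \<in> (if card V = n then {\<kappa> \<in> V \<rightarrow>\<^sub>E {..<k}. \<Phi> \<kappa>} else {})"
      using \<alpha> sum_colour_counts[OF fin \<alpha>(4)] by (auto simp: monomials_in_def PiE_iff)
  next
    fix \<kappa> assume \<kappa>: "\<kappa> \<in> (if card V = n then {\<kappa> \<in> V \<rightarrow>\<^sub>E {..<k}. \<Phi> \<kappa>} else {})"
    define \<alpha> where "\<alpha> = Abs_poly_mapping (\<lambda>i. card {v\<in>V. \<kappa> v = i})"
    have counts: "has_colour_counts V \<kappa> \<alpha>"
      unfolding \<alpha>_def using fin by (rule has_colour_counts_Abs_poly_mapping)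
    have im: "\<kappa> ` V \<subseteq> {..<k}" and "card V = n"
      using \<kappa> by (auto simp: PiE_iff split: if_splits)
    then have "\<alpha> \<in> monomials_in k n"
      using keys_colour_counts[OF fin counts] sum_colour_counts[OF fin counts im]
      by (auto simp: monomials_in_def)
    then show "\<kappa> \<in> (\<Union>\<alpha>\<in>monomials_in k n. ?A \<alpha>)"
      using \<kappa> counts by (auto simp: PiE_iff split: if_splits)
  qed
  finally show ?thesis
    by simp
qed

lemma card_constant_colourings:
  assumes "\<forall>m\<in>set lam. 0 < m"
  shows "card {\<kappa> \<in> path_forest_V lam \<rightarrow>\<^sub>E {..<k}. \<forall>(u, w)\<in>path_edges lam. \<kappa> u = \<kappa> w} = k ^ length lam"
  using bij_betw_same_card[OF bij_betw_component_colouring[OF assms, of "{..<k}"]]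
  by (simp add: card_lists_length_eq)

lemma sum_lpf_count_monomials_in:
  "(\<Sum>\<alpha>\<in>monomials_in k n. lpf_count cs \<alpha>) =
    (if sum_list (lpf_sizes cs) = n then k ^ length cs * (k - 1) ^ card (lpf_edges False cs) else 0)"
proof (induction "card (lpf_edges False cs)" arbitrary: cs rule: less_induct)
  case less
  show ?case
  proof (cases "lpf_edges False cs = {}")
    case True
    let ?V = "path_forest_V (lpf_sizes cs)"
    have "lpf_count cs \<alpha> = card {\<kappa> \<in> ?V \<rightarrow>\<^sub>E UNIV.
        (\<forall>(u, w)\<in>path_edges (lpf_sizes cs). \<kappa> u = \<kappa> w) \<and> has_colour_counts ?V \<kappa> \<alpha>}" for \<alpha>
      using True lpf_edges_other_if_empty[OF True]
      by (simp add: lpf_count_def constrained_colourings_def)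
    then show ?thesis
      using True card_constant_colourings[OF lpf_sizes_pos]
      by (simp add: sum_card_colourings_monomials_in card_path_forest_V)
  next
    case False
    then obtain j i where "j < length cs" "i < length (cs ! j)" "\<not> cs ! j ! i"
      by (auto simp: lpf_edges_def)
    then interpret lpf_edge cs j i
      by unfold_locales
    have label: "\<not> edge_label"
      using \<open>\<not> cs ! j ! i\<close> by (simp add: edge_label_def)
    define F where "F = card (lpf_edges False cs)"
    have F_pos: "0 < F"
      using card_lpf_edges_edge_label_pos label by (simp add: F_def)
    have cut: "card (lpf_edges False cut_forest) = F - 1"
      and flip: "card (lpf_edges False flip_forest) = F - 1"
      using card_lpf_edges_edge_label_decrease label by (simp_all add: F_def)
    have "(\<Sum>\<alpha>\<in>monomials_in k n. lpf_count cs \<alpha>) =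
        (\<Sum>\<alpha>\<in>monomials_in k n. lpf_count cut_forest \<alpha>) - (\<Sum>\<alpha>\<in>monomials_in k n. lpf_count flip_forest \<alpha>)"
      by (simp add: lpf_count_cut_forest sum.distrib)
    also have "\<dots> = (if sum_list (lpf_sizes cs) = n
        then k ^ Suc (length cs) * (k - 1) ^ (F - 1) - k ^ length cs * (k - 1) ^ (F - 1) else 0)"
      using less[of cut_forest] less[of flip_forest] F_pos cut flip
      by (simp add: F_def sum_list_lpf_sizes_cut_forest lpf_sizes_flip_forest)
    also have "\<dots> = (if sum_list (lpf_sizes cs) = n then k ^ length cs * (k - 1) ^ F else 0)"
      using F_pos by (cases F) (simp_all add: diff_mult_distrib diff_mult_distrib2 mult_ac)
    finally show ?thesis
      by (simp add: F_def)
  qed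
qed

lemma sum_X_path_monomials_in:
  assumes "\<forall>m\<in>set \<mu>. 0 < m"
  shows "(\<Sum>\<alpha>\<in>monomials_in k n. X_path \<mu> \<alpha>) =
    (if sum_list \<mu> = n then of_nat (k ^ length \<mu> * (k - 1) ^ (sum_list \<mu> - length \<mu>)) else 0)"
proof -
  let ?cs = "uniform_labels False \<mu>"
  have "X_path \<mu> \<alpha> = of_nat (lpf_count ?cs \<alpha>)" for \<alpha>
    by (simp add: X_path_eq_card lpf_count_uniform_labels[OF assms])
  moreover have "card (lpf_edges False ?cs) = sum_list \<mu> - length \<mu>"
    using lpf_edges_other_if_empty[OF lpf_edges_uniform_labels[of False \<mu>]]
    by (simp add: lpf_sizes_uniform_labels[OF assms] card_path_edges[OF assms])
  ultimately show ?thesis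
    using sum_lpf_count_monomials_in[where cs = ?cs]
    by (simp add: lpf_sizes_uniform_labels[OF assms] flip: of_nat_sum)
qed

lemma sum_power_sum_part_monomials_in:
  assumes "\<forall>m\<in>set lam. 0 < m"
  shows "(\<Sum>\<alpha>\<in>monomials_in k n. power_sum_part lam \<alpha>) =
    (if sum_list lam = n then of_nat (k ^ length lam) else 0)"
  using sum_lpf_count_monomials_in[where cs = "uniform_labels True lam"]
  by (simp add: power_sum_part_eq_lpf_count[OF assms] lpf_sizes_uniform_labels[OF assms]
      lpf_edges_uniform_labels[of True, simplified] flip: of_nat_sum)

section \<open>The polynomial \<open>tau\<close>\<close>

lemma path_expansion_sum_monomials_in:
  assumes pos: "\<forall>m\<in>set lam. 0 < m" and a: "is_path_expansion a (power_sum_part lam)"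
  shows "(\<Sum>\<mu> | a \<mu> \<noteq> 0 \<and> sum_list \<mu> = n. a \<mu> * of_nat (k ^ length \<mu> * (k - 1) ^ (n - length \<mu>))) =
    (if sum_list lam = n then of_nat (k ^ length lam) else 0)"
proof -
  let ?M = "{\<mu>. a \<mu> \<noteq> 0}"
  have fin: "finite ?M" and parts: "\<And>\<mu>. \<mu> \<in> ?M \<Longrightarrow> \<forall>m\<in>set \<mu>. 0 < m"
    and expansion: "\<And>\<alpha>. power_sum_part lam \<alpha> = (\<Sum>\<mu>\<in>?M. a \<mu> * X_path \<mu> \<alpha>)"
    using a by (auto simp: is_path_expansion_def is_partition_def)
  have "(if sum_list lam = n then of_nat (k ^ length lam) else 0) =
      (\<Sum>\<alpha>\<in>monomials_in k n. power_sum_part lam \<alpha>)"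
    by (rule sum_power_sum_part_monomials_in[OF pos, symmetric])
  also have "\<dots> = (\<Sum>\<mu>\<in>?M. a \<mu> * (\<Sum>\<alpha>\<in>monomials_in k n. X_path \<mu> \<alpha>))"
    unfolding expansion sum_distrib_left by (rule sum.swap)
  also have "\<dots> = (\<Sum>\<mu>\<in>?M. if sum_list \<mu> = n
      then a \<mu> * of_nat (k ^ length \<mu> * (k - 1) ^ (n - length \<mu>)) else 0)"
    by (intro sum.cong refl) (simp add: sum_X_path_monomials_in[OF parts])
  also have "\<dots> = (\<Sum>\<mu>\<in>{\<mu> \<in> ?M. sum_list \<mu> = n}. a \<mu> * of_nat (k ^ length \<mu> * (k - 1) ^ (n - length \<mu>)))"
    by (rule sum.inter_filter[OF fin, symmetric])
  finally show ?thesis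
    by simp
qed

lemma poly_sum_monom_times_power:
  fixes a :: "'b \<Rightarrow> 'a::comm_ring_1"
  assumes "\<forall>\<mu>\<in>M. f \<mu> \<le> n" and "x * d = c"
  shows "poly (\<Sum>\<mu>\<in>M. monom (a \<mu>) (f \<mu>)) x * d ^ n = (\<Sum>\<mu>\<in>M. a \<mu> * c ^ f \<mu> * d ^ (n - f \<mu>))"
proof -
  have "x ^ f \<mu> * d ^ n = c ^ f \<mu> * d ^ (n - f \<mu>)" if "\<mu> \<in> M" for \<mu>
  proof -
    have "x ^ f \<mu> * d ^ n = x ^ f \<mu> * (d ^ f \<mu> * d ^ (n - f \<mu>))"
      using assms(1) that by (simp flip: power_add)
    also have "\<dots> = (x * d) ^ f \<mu> * d ^ (n - f \<mu>)"
      by (simp add: power_mult_distrib mult.assoc)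
    finally show ?thesis
      using assms(2) by simp
  qed
  then show ?thesis
    by (simp add: poly_sum poly_monom sum_distrib_right mult.assoc)
qed

lemma poly_monom_times_power:
  fixes x d c :: "'a::comm_ring_1"
  assumes "x * d = c" "(x - 1) * d = 1" "l \<le> N"
  shows "poly (monom 1 l * [:-1, 1:] ^ (N - l)) x * d ^ N = c ^ l"
proof -
  have "d ^ N = d ^ l * d ^ (N - l)"
    using assms(3) by (simp flip: power_add)
  then have "poly (monom 1 l * [:-1, 1:] ^ (N - l)) x * d ^ N = (x * d) ^ l * ((x - 1) * d) ^ (N - l)"
    by (simp add: poly_monom power_mult_distrib mult_ac)
  then show ?thesis
    using assms(1,2) by simp
qed

lemma poly_eq_0_if_vanishes_at_ratios:
  fixes P :: "rat poly"
  assumes "\<And>k. k \<ge> 2 \<Longrightarrow> poly P (of_nat k / (of_nat k - 1)) = 0"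
  shows "P = 0"
proof (rule ccontr)
  let ?r = "\<lambda>k::nat. (of_nat k / (of_nat k - 1) :: rat)"
  assume "P \<noteq> 0"
  then have "finite {x. poly P x = 0}"
    by (rule poly_roots_finite)
  moreover have "?r ` {2..} \<subseteq> {x. poly P x = 0}"
    using assms by auto
  moreover have "inj_on ?r {2..}"
  proof (rule inj_onI)
    fix k k' :: nat assume "k \<in> {2..}" "k' \<in> {2..}" "?r k = ?r k'"
    then have "(of_nat k :: rat) * (of_nat k' - 1) = of_nat k' * (of_nat k - 1)"
      by (simp add: field_simps)
    then show "k = k'"
      by (simp add: algebra_simps)
  qed
  ultimately have "finite {2::nat..}"
    using finite_subset finite_imageD by blast
  then show False
    using infinite_Ici by blast
qed

lemma path_expansion_degree_part:
  assumes pos: "\<forall>m\<in>set lam. 0 < m" and a: "is_path_expansion a (power_sum_part lam)"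
  shows "(\<Sum>\<mu> | a \<mu> \<noteq> 0 \<and> sum_list \<mu> = n. monom (a \<mu>) (length \<mu>)) =
    (if n = sum_list lam then monom 1 (length lam) * [:-1, 1:] ^ (sum_list lam - length lam) else 0)"
    (is "?Q = ?R")
proof -
  have "poly (?Q - ?R) (of_nat k / (of_nat k - 1)) = 0" if "k \<ge> 2" for k :: nat
  proof -
    define d :: rat where "d = of_nat k - 1"
    define x where "x = of_nat k / d"
    have "d \<noteq> 0"
      using that by (simp add: d_def)
    then have xd: "x * d = of_nat k" and x1d: "(x - 1) * d = 1"
      by (simp_all add: x_def d_def field_simps)
    have dk: "of_nat (k - 1) = d"
      using that by (simp add: d_def of_nat_diff)
    have "\<forall>\<mu>\<in>{\<mu>. a \<mu> \<noteq> 0 \<and> sum_list \<mu> = n}. length \<mu> \<le> n"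
      using a length_le_sum_list by (auto simp: is_path_expansion_def is_partition_def)
    then have "poly ?Q x * d ^ n =
        (\<Sum>\<mu> | a \<mu> \<noteq> 0 \<and> sum_list \<mu> = n. a \<mu> * of_nat k ^ length \<mu> * d ^ (n - length \<mu>))"
      by (rule poly_sum_monom_times_power[OF _ xd])
    also have "\<dots> = (if sum_list lam = n then of_nat (k ^ length lam) else 0)"
      using path_expansion_sum_monomials_in[OF pos a, where n = n and k = k]
      by (simp only: of_nat_mult of_nat_power dk mult.assoc)
    finally have "poly ?Q x * d ^ n = (if sum_list lam = n then of_nat (k ^ length lam) else 0)" .
    moreover have "poly ?R x * d ^ n = (if sum_list lam = n then of_nat (k ^ length lam) else 0)"
    proof (cases "n = sum_list lam")
      case True
      then show ?thesis
        using poly_monom_times_power[OF xd x1d length_le_sum_list[OF pos]] by simp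
    qed simp
    ultimately have "poly (?Q - ?R) x * d ^ n = 0"
      by (simp add: algebra_simps)
    then show ?thesis
      using \<open>d \<noteq> 0\<close> by (simp add: x_def d_def)
  qed
  then show ?thesis
    using poly_eq_0_if_vanishes_at_ratios[of "?Q - ?R"] by simp
qed

lemma tau_path_expansion_power_sum_part:
  assumes pos: "\<forall>m\<in>set lam. 0 < m" and a: "is_path_expansion a (power_sum_part lam)"
  shows "tau a = monom 1 (length lam) * [:-1, 1:] ^ (sum_list lam - length lam)"
proof -
  let ?M = "{\<mu>. a \<mu> \<noteq> 0}"
  have fin: "finite ?M"
    using a by (simp add: is_path_expansion_def)
  have "tau a = (\<Sum>n\<in>insert (sum_list lam) (sum_list ` ?M).
      \<Sum>\<mu> | a \<mu> \<noteq> 0 \<and> sum_list \<mu> = n. monom (a \<mu>) (length \<mu>))"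
    unfolding tau_def using fin by (subst sum.group[symmetric]) (auto intro: sum.cong)
  also have "\<dots> = monom 1 (length lam) * [:-1, 1:] ^ (sum_list lam - length lam)"
    using fin by (simp add: path_expansion_degree_part[OF pos a])
  finally show ?thesis .
qed

theorem proposition4p2:
  fixes lam :: "nat list"
  assumes "is_partition lam"
  shows "(\<exists>a. is_path_expansion a (power_sum_part lam)) \<and>
         (\<forall>a. is_path_expansion a (power_sum_part lam) \<longrightarrow>
              tau a = monom 1 (length lam) * [:-1, 1:] ^ (sum_list lam - length lam))"
proof -
  have pos: "\<forall>m\<in>set lam. 0 < m"
    using assms by (simp add: is_partition_def)
  show ?thesis
    using in_path_span_power_sum_part[OF pos] tau_path_expansion_power_sum_part[OF pos]
    by (simp add: in_path_span_def)
qed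

end
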